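(* Let $(\Omega,\mathcal{F},\mathbb{P})$ be a nonatomic probability space and let $(\mathcal{X},\mathcal{X}^\ast)$ be a pair of law-invariant vector subspaces of $L^1$, each containing $L^\infty$, such that $XY\in L^1$ for all $X\in\mathcal{X}$ and $Y\in\mathcal{X}^\ast$. Let $\varphi:\mathcal{X}\to(-\infty,\infty]$ be proper, convex and $\sigma(\mathcal{X},\mathcal{X}^\ast)$-lower semicontinuous, and let $\mathcal{S}\subset\mathcal{X}$ be such that $\mathrm{span}(\mathcal{S})$ is $\sigma(\mathcal{X},\mathcal{X}^\ast)$-dense in $\mathcal{X}$. If $\varphi$ is affine along every element of $\mathcal{S}$, then $\varphi$ is affine on $\mathcal{X}$ and there exists a unique $Y\in\mathcal{X}^\ast$ such that $\varphi(X)=\mathbb{E}_{\mathbb{P}}[XY]+\varphi(0)$ for every $X\in\mathcal{X}$.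
   Context: $L^0$ denotes the space of real random variables on $(\Omega,\mathcal{F},\mathbb{P})$ modulo almost-sure equality. For $X,Y\in L^0$, $X\sim Y$ means same law under $\mathbb{P}$; a set $\mathcal{S}\subset L^0$ is law invariant if $X\in\mathcal{S}$ whenever $X\in L^0$ and $X\sim Y$ for some $Y\in\mathcal{S}$. $\sigma(\mathcal{X},\mathcal{X}^\ast)$ is the weakest linear topology on $\mathcal{X}$ for which $X\mapsto\mathbb{E}_{\mathbb{P}}[XY]$ is continuous for every $Y\in\mathcal{X}^\ast$. $\mathrm{span}(\mathcal{S})$ is the smallest linear subspace containing $\mathcal{S}$. For $\varphi:\mathcal{X}\to(-\infty,\infty]$: $\mathrm{dom}(\varphi)=\{X:\varphi(X)<\infty\}$; proper means $\mathrm{dom}(\varphi)\neq\emptyset$; $\sigma(\mathcal{X},\mathcal{X}^\ast)$-lower semicontinuous means $\varphi(X)\le\liminf_\alpha\varphi(X_\alpha)$ for every net $X_\alpha\to X$ in $\sigma(\mathcal{X},\mathcal{X}^\ast)$. $\varphi$ is affine along an element $Z$ if $mZ\in\mathrm{dom}(\varphi)$ for all $m\in\mathbb{R}$ and $m\mapsto\varphi(mZ)-\varphi(0)$ is linear, i.e. $\varphi(mZ)=am+\varphi(0)$ for some $a\in\mathbb{R}$; $\varphi$ is affine on $\mathcal{X}$ if $\varphi$ is finite on $\mathcal{X}$ and $X\mapsto\varphi(X)-\varphi(0)$ is linear on $\mathcal{X}$. *)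

theory Defs
  imports "HOL-Probability.Probability"
begin

(* Random variables are represented by real functions on the sample space; L^0 classes
   are handled by requiring law invariance (which forces closure under a.e. equality)
   and by requiring phi to be constant on a.e.-classes. *)

definition nonatomic :: "'a measure \<Rightarrow> bool" where
  "nonatomic M \<longleftrightarrow> (\<forall>A\<in>sets M. 0 < measure M A \<longrightarrow>
      (\<exists>B\<in>sets M. B \<subseteq> A \<and> 0 < measure M B \<and> measure M B < measure M A))"

definition same_law :: "'a measure \<Rightarrow> ('a \<Rightarrow> real) \<Rightarrow> ('a \<Rightarrow> real) \<Rightarrow> bool" where
  "same_law M X Y \<longleftrightarrow> distr M borel X = distr M borel Y"

definition law_invariant :: "'a measure \<Rightarrow> ('a \<Rightarrow> real) set \<Rightarrow> bool" where
  "law_invariant M S \<longleftrightarrow> (\<forall>X Y. X \<in> borel_measurable M \<longrightarrow> Y \<in> S \<longrightarrow> same_law M X Y \<longrightarrow> X \<in> S)"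

definition lin_subspace :: "('a \<Rightarrow> real) set \<Rightarrow> bool" where
  "lin_subspace S \<longleftrightarrow> (\<lambda>_. 0) \<in> S \<and> (\<forall>X\<in>S. \<forall>Y\<in>S. (\<lambda>\<omega>. X \<omega> + Y \<omega>) \<in> S)
     \<and> (\<forall>c. \<forall>X\<in>S. (\<lambda>\<omega>. c * X \<omega>) \<in> S)"

definition Linfty :: "'a measure \<Rightarrow> ('a \<Rightarrow> real) set" where
  "Linfty M = {X \<in> borel_measurable M. \<exists>C. AE \<omega> in M. \<bar>X \<omega>\<bar> \<le> C}"

definition fspan :: "('a \<Rightarrow> real) set \<Rightarrow> ('a \<Rightarrow> real) set" where
  "fspan S = {(\<lambda>\<omega>. \<Sum>i<n. c i * Z i \<omega>) | (n::nat) c Z. \<forall>i<n. Z i \<in> S}"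

definition weak_conv :: "'a measure \<Rightarrow> ('a \<Rightarrow> real) set \<Rightarrow> ('a \<Rightarrow> real) filter \<Rightarrow> ('a \<Rightarrow> real) \<Rightarrow> bool" where
  "weak_conv M Xs F X \<longleftrightarrow> (\<forall>Y\<in>Xs. ((\<lambda>X'. integral\<^sup>L M (\<lambda>\<omega>. X' \<omega> * Y \<omega>))
        \<longlongrightarrow> integral\<^sup>L M (\<lambda>\<omega>. X \<omega> * Y \<omega>)) F)"

definition weakly_dense :: "'a measure \<Rightarrow> ('a \<Rightarrow> real) set \<Rightarrow> ('a \<Rightarrow> real) set \<Rightarrow> ('a \<Rightarrow> real) set \<Rightarrow> bool" where
  "weakly_dense M X Xs T \<longleftrightarrow> (\<forall>x\<in>X. \<exists>F. F \<noteq> bot \<and> eventually (\<lambda>x'. x' \<in> T) F \<and> weak_conv M Xs F x)"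

definition weakly_lsc :: "'a measure \<Rightarrow> ('a \<Rightarrow> real) set \<Rightarrow> ('a \<Rightarrow> real) set \<Rightarrow> (('a \<Rightarrow> real) \<Rightarrow> ereal) \<Rightarrow> bool" where
  "weakly_lsc M X Xs \<phi> \<longleftrightarrow> (\<forall>F x. x \<in> X \<longrightarrow> eventually (\<lambda>x'. x' \<in> X) F \<longrightarrow> weak_conv M Xs F x
      \<longrightarrow> \<phi> x \<le> Liminf F \<phi>)"

definition proper_on :: "('a \<Rightarrow> real) set \<Rightarrow> (('a \<Rightarrow> real) \<Rightarrow> ereal) \<Rightarrow> bool" where
  "proper_on X \<phi> \<longleftrightarrow> (\<exists>x\<in>X. \<phi> x < \<infinity>)"

definition convex_on_fs :: "('a \<Rightarrow> real) set \<Rightarrow> (('a \<Rightarrow> real) \<Rightarrow> ereal) \<Rightarrow> bool" where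
  "convex_on_fs X \<phi> \<longleftrightarrow> (\<forall>x\<in>X. \<forall>y\<in>X. \<forall>t::real. 0 < t \<longrightarrow> t < 1 \<longrightarrow>
      \<phi> (\<lambda>\<omega>. t * x \<omega> + (1 - t) * y \<omega>) \<le> ereal t * \<phi> x + ereal (1 - t) * \<phi> y)"

definition affine_along :: "(('a \<Rightarrow> real) \<Rightarrow> ereal) \<Rightarrow> ('a \<Rightarrow> real) \<Rightarrow> bool" where
  "affine_along \<phi> Z \<longleftrightarrow> (\<forall>m::real. \<phi> (\<lambda>\<omega>. m * Z \<omega>) < \<infinity>) \<and>
      (\<exists>a::real. \<forall>m::real. \<phi> (\<lambda>\<omega>. m * Z \<omega>) = ereal (a * m) + \<phi> (\<lambda>_. 0))"

definition affine_on_fs :: "('a \<Rightarrow> real) set \<Rightarrow> (('a \<Rightarrow> real) \<Rightarrow> ereal) \<Rightarrow> bool" where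
  "affine_on_fs X \<phi> \<longleftrightarrow> (\<forall>x\<in>X. \<bar>\<phi> x\<bar> < \<infinity>) \<and>
     (\<forall>x\<in>X. \<forall>y\<in>X. \<forall>a b::real.
        real_of_ereal (\<phi> (\<lambda>\<omega>. a * x \<omega> + b * y \<omega>)) - real_of_ereal (\<phi> (\<lambda>_. 0))
        = a * (real_of_ereal (\<phi> x) - real_of_ereal (\<phi> (\<lambda>_. 0)))
          + b * (real_of_ereal (\<phi> y) - real_of_ereal (\<phi> (\<lambda>_. 0))))"

end

theory Submission
  imports Defs
begin

(* On span S the function is affine: midpoint convexity bounds phi (sum c_i z_i) above by the
   affine value sum c_i a_i + phi 0, and convexity along the segment from v to -v through 0 bounds
   it below. Lower semicontinuity at 0 yields a weak neighbourhood {v. |E[v y_i]| < e, i < n} of 0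
   on which the linear part L exceeds -1; by scaling, L vanishes on the common kernel of the
   functionals E[. y_i], so L = E[. Y] for a combination Y of the y_i. Density and lower
   semicontinuity extend phi <= E[. Y] + phi 0 to all of X, and the reflection argument gives
   equality. Y is unique because E[(Y' - Y) sgn (Y' - Y)] = 0. *)

definition linear_on :: "('a \<Rightarrow> real) set \<Rightarrow> (('a \<Rightarrow> real) \<Rightarrow> real) \<Rightarrow> bool" where
  "linear_on V L \<longleftrightarrow> (\<forall>u\<in>V. \<forall>w\<in>V. \<forall>a b. L (\<lambda>\<omega>. a * u \<omega> + b * w \<omega>) = a * L u + b * L w)"

lemma lin_subspace_lincomb:
  assumes "lin_subspace V" "u \<in> V" "w \<in> V"
  shows "(\<lambda>\<omega>. a * u \<omega> + b * w \<omega>) \<in> V"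
  using assms unfolding lin_subspace_def by auto

lemma lin_subspace_sum:
  fixes n :: nat
  assumes "lin_subspace V" "\<forall>i<n. Z i \<in> V"
  shows "(\<lambda>\<omega>. \<Sum>i<n. c i * Z i \<omega>) \<in> V"
  using assms(2)
proof (induction n)
  case 0
  then show ?case using assms(1) unfolding lin_subspace_def by simp
next
  case (Suc n)
  have "(\<lambda>\<omega>. 1 * (\<Sum>i<n. c i * Z i \<omega>) + c n * Z n \<omega>) \<in> V"
    using Suc by (intro lin_subspace_lincomb[OF assms(1)]) auto
  then show ?case by simp
qed

lemma sum_append_lincomb:
  fixes n m :: nat and g :: "'b \<Rightarrow> real"
  shows "(\<Sum>k<n + m. (if k < n then a * c k else b * d (k - n)) * g (if k < n then Z k else W (k - n)))
    = a * (\<Sum>i<n. c i * g (Z i)) + b * (\<Sum>j<m. d j * g (W j))"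
  by (induction m) (auto simp: sum_distrib_left algebra_simps intro!: sum.cong)

lemma fspan_lincomb_repr:
  fixes n m :: nat and u w :: "'a \<Rightarrow> real"
  assumes "u = (\<lambda>\<omega>. \<Sum>i<n. c i * Z i \<omega>)" "w = (\<lambda>\<omega>. \<Sum>j<m. d j * W j \<omega>)"
  shows "(\<lambda>\<omega>. a * u \<omega> + b * w \<omega>)
    = (\<lambda>\<omega>. \<Sum>k<n + m. (if k < n then a * c k else b * d (k - n)) * (if k < n then Z k else W (k - n)) \<omega>)"
proof
  fix \<omega>
  show "a * u \<omega> + b * w \<omega>
    = (\<Sum>k<n + m. (if k < n then a * c k else b * d (k - n)) * (if k < n then Z k else W (k - n)) \<omega>)"
    unfolding assms by (rule sym) (rule sum_append_lincomb[where g = "\<lambda>z. z \<omega>"])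
qed

lemma fspan_lincomb:
  assumes "u \<in> fspan S" "w \<in> fspan S"
  shows "(\<lambda>\<omega>. a * u \<omega> + b * w \<omega>) \<in> fspan S"
proof -
  obtain n :: nat and c Z where "u = (\<lambda>\<omega>. \<Sum>i<n. c i * Z i \<omega>)" "\<forall>i<n. Z i \<in> S"
    using assms(1) unfolding fspan_def by blast
  moreover obtain m :: nat and d W where "w = (\<lambda>\<omega>. \<Sum>j<m. d j * W j \<omega>)" "\<forall>j<m. W j \<in> S"
    using assms(2) unfolding fspan_def by blast
  ultimately show ?thesis
    unfolding fspan_def
    by (subst fspan_lincomb_repr)
      (auto intro!: exI[of _ "n + m"] exI[of _ "\<lambda>k. if k < n then a * c k else b * d (k - n)"]
        exI[of _ "\<lambda>k. if k < n then Z k else W (k - n)"])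
qed

lemma lin_subspace_fspan: "lin_subspace (fspan S)"
proof -
  have "(\<lambda>_. 0) \<in> fspan S"
    unfolding fspan_def by (auto intro!: exI[of _ "0::nat"])
  then show ?thesis
    using fspan_lincomb[of _ S _ 1 1] fspan_lincomb[of _ S _ _ 0] unfolding lin_subspace_def by auto
qed

lemma fspan_subset:
  assumes "lin_subspace X" "S \<subseteq> X"
  shows "fspan S \<subseteq> X"
  using lin_subspace_sum[OF assms(1)] assms(2) unfolding fspan_def by blast

lemma fspan_empty: "fspan {} = {\<lambda>_. 0}"
proof -
  have "(\<lambda>\<omega>. \<Sum>i<n. c i * Z i \<omega>) = (\<lambda>_. 0)" if "\<forall>i<n. Z i \<in> {}" for n :: nat and c Z
    using that by (cases n) auto
  then show ?thesis
    unfolding fspan_def by (auto intro!: exI[of _ "0::nat"])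
qed

lemma linear_on_combination_if_common_kernel:
  fixes f :: "nat \<Rightarrow> ('a \<Rightarrow> real) \<Rightarrow> real" and n :: nat
  assumes V: "lin_subspace V" and f: "\<forall>i<n. linear_on V (f i)"
    and "linear_on V L" and "\<forall>v\<in>V. (\<forall>i<n. f i v = 0) \<longrightarrow> L v = 0"
  shows "\<exists>coef. \<forall>v\<in>V. L v = (\<Sum>i<n. coef i * f i v)"
  using f assms(3,4)
proof (induction n arbitrary: L)
  case 0
  then show ?case by simp
next
  case (Suc n)
  show ?case
  proof (cases "\<forall>v\<in>V. (\<forall>i<n. f i v = 0) \<longrightarrow> f n v = 0")
    case True
    then have "\<forall>v\<in>V. (\<forall>i<n. f i v = 0) \<longrightarrow> L v = 0"
      using Suc.prems(3) less_Suc_eq by auto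
    then obtain coef where "\<forall>v\<in>V. L v = (\<Sum>i<n. coef i * f i v)"
      using Suc.IH Suc.prems(1,2) by fastforce
    then show ?thesis
      by (intro exI[of _ "coef(n := 0)"]) simp
  next
    case False
    then obtain w where w: "w \<in> V" "\<forall>i<n. f i w = 0" "f n w \<noteq> 0" by auto
    define L' where "L' v = L v - (L w / f n w) * f n v" for v
    have "linear_on V L'"
      using Suc.prems(1,2) unfolding linear_on_def L'_def by (simp add: algebra_simps)
    moreover have "L' v = 0" if v: "v \<in> V" "\<forall>i<n. f i v = 0" for v
    proof -
      \<comment> \<open>Projecting v along w onto the common kernel of f 0, ..., f n.\<close>
      define v' where "v' = (\<lambda>\<omega>. 1 * v \<omega> + (- (f n v / f n w)) * w \<omega>)"
      have "v' \<in> V" using lin_subspace_lincomb[OF V v(1) w(1)] unfolding v'_def .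
      moreover have "f i v' = f i v - (f n v / f n w) * f i w" if "i < Suc n" for i
        using Suc.prems(1)[rule_format, OF that, unfolded linear_on_def, rule_format, OF v(1) w(1),
            of 1 "- (f n v / f n w)"]
        unfolding v'_def by simp
      then have "\<forall>i<Suc n. f i v' = 0"
        using v w by (auto simp: less_Suc_eq)
      ultimately have "L v' = 0" using Suc.prems(3) by blast
      moreover have "L v' = L v - (f n v / f n w) * L w"
        using Suc.prems(2)[unfolded linear_on_def, rule_format, OF v(1) w(1), of 1 "- (f n v / f n w)"]
        unfolding v'_def by simp
      ultimately show "L' v = 0" unfolding L'_def by (simp add: field_simps)
    qed
    ultimately obtain coef where "\<forall>v\<in>V. L' v = (\<Sum>i<n. coef i * f i v)"
      using Suc.IH Suc.prems(1) by fastforce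
    then show ?thesis
      by (intro exI[of _ "coef(n := L w / f n w)"]) (simp add: L'_def algebra_simps)
  qed
qed

definition pairing :: "'a measure \<Rightarrow> ('a \<Rightarrow> real) \<Rightarrow> ('a \<Rightarrow> real) \<Rightarrow> real" where
  "pairing M x y = integral\<^sup>L M (\<lambda>\<omega>. x \<omega> * y \<omega>)"

lemma linear_on_pairing:
  assumes "\<forall>v\<in>V. integrable M (\<lambda>\<omega>. v \<omega> * y \<omega>)"
  shows "linear_on V (\<lambda>v. pairing M v y)"
  unfolding linear_on_def pairing_def
proof (intro ballI allI)
  fix u w a b assume "u \<in> V" "w \<in> V"
  moreover have "(\<lambda>\<omega>. (a * u \<omega> + b * w \<omega>) * y \<omega>) = (\<lambda>\<omega>. a * (u \<omega> * y \<omega>) + b * (w \<omega> * y \<omega>))"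
    by (simp add: algebra_simps)
  ultimately show "integral\<^sup>L M (\<lambda>\<omega>. (a * u \<omega> + b * w \<omega>) * y \<omega>)
      = a * integral\<^sup>L M (\<lambda>\<omega>. u \<omega> * y \<omega>) + b * integral\<^sup>L M (\<lambda>\<omega>. w \<omega> * y \<omega>)"
    using assms by simp
qed

lemma pairing_sum_right:
  fixes n :: nat
  assumes "\<forall>i<n. integrable M (\<lambda>\<omega>. x \<omega> * Y i \<omega>)"
  shows "pairing M x (\<lambda>\<omega>. \<Sum>i<n. c i * Y i \<omega>) = (\<Sum>i<n. c i * pairing M x (Y i))"
proof -
  have "pairing M x (\<lambda>\<omega>. \<Sum>i<n. c i * Y i \<omega>) = integral\<^sup>L M (\<lambda>\<omega>. \<Sum>i<n. c i * (x \<omega> * Y i \<omega>))"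
    unfolding pairing_def by (simp add: sum_distrib_left algebra_simps)
  also have "\<dots> = (\<Sum>i<n. c i * pairing M x (Y i))"
    using assms unfolding pairing_def by (subst Bochner_Integration.integral_sum) auto
  finally show ?thesis .
qed

lemma sgn_in_Linfty:
  assumes "d \<in> borel_measurable M"
  shows "(\<lambda>\<omega>. sgn (d \<omega>)) \<in> Linfty M"
proof -
  have "\<forall>\<omega>. \<bar>sgn (d \<omega>)\<bar> \<le> (1::real)" by (simp add: abs_sgn_eq)
  then show ?thesis unfolding Linfty_def using assms by auto
qed

lemma AE_zero_if_orthogonal_to_Linfty:
  assumes "integrable M d" "\<forall>s\<in>Linfty M. pairing M s d = 0"
  shows "AE \<omega> in M. d \<omega> = 0"
proof -
  have "(\<lambda>\<omega>. sgn (d \<omega>) * d \<omega>) = (\<lambda>\<omega>. \<bar>d \<omega>\<bar>)"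
    by (simp add: abs_if sgn_if fun_eq_iff)
  then have "integral\<^sup>L M (\<lambda>\<omega>. \<bar>d \<omega>\<bar>) = 0"
    using assms(2) sgn_in_Linfty[OF borel_measurable_integrable[OF assms(1)]]
    unfolding pairing_def by force
  then have "AE \<omega> in M. \<bar>d \<omega>\<bar> = 0"
    using integral_nonneg_eq_0_iff_AE[of M "\<lambda>\<omega>. \<bar>d \<omega>\<bar>"] assms(1) by auto
  then show ?thesis by auto
qed

lemma AE_eq_if_pairings_eq:
  assumes "Linfty M \<subseteq> X" "integrable M Y" "integrable M Y'"
    and "\<forall>x\<in>X. integrable M (\<lambda>\<omega>. x \<omega> * Y \<omega>) \<and> integrable M (\<lambda>\<omega>. x \<omega> * Y' \<omega>)"
    and "\<forall>x\<in>X. pairing M x Y = pairing M x Y'"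
  shows "AE \<omega> in M. Y \<omega> = Y' \<omega>"
proof -
  have "\<forall>s\<in>Linfty M. pairing M s (\<lambda>\<omega>. Y \<omega> - Y' \<omega>) = 0"
    using assms(1,4,5) unfolding pairing_def by (auto simp: right_diff_distrib)
  then have "AE \<omega> in M. Y \<omega> - Y' \<omega> = 0"
    using assms(2,3) by (intro AE_zero_if_orthogonal_to_Linfty) auto
  then show ?thesis by auto
qed

lemma AE_zero_if_weakly_dense_zero:
  assumes "Linfty M \<subseteq> Xs" "weakly_dense M X Xs {\<lambda>_. 0}" "x \<in> X" "integrable M x"
  shows "AE \<omega> in M. x \<omega> = 0"
proof -
  obtain F where F: "F \<noteq> bot" "eventually (\<lambda>v. v \<in> {\<lambda>_. 0}) F" "weak_conv M Xs F x"
    using assms(2,3) unfolding weakly_dense_def by blast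
  have "pairing M s x = 0" if "s \<in> Linfty M" for s
  proof -
    have "((\<lambda>v. integral\<^sup>L M (\<lambda>\<omega>. v \<omega> * s \<omega>)) \<longlongrightarrow> integral\<^sup>L M (\<lambda>\<omega>. x \<omega> * s \<omega>)) F"
      using F(3) assms(1) that unfolding weak_conv_def by blast
    moreover have "eventually (\<lambda>v. integral\<^sup>L M (\<lambda>\<omega>. v \<omega> * s \<omega>) = 0) F"
      by (rule eventually_mono[OF F(2)]) simp
    then have "((\<lambda>v. integral\<^sup>L M (\<lambda>\<omega>. v \<omega> * s \<omega>)) \<longlongrightarrow> 0) F"
      by (rule tendsto_eventually)
    ultimately have "integral\<^sup>L M (\<lambda>\<omega>. x \<omega> * s \<omega>) = 0"
      by (rule tendsto_unique[OF F(1)])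
    then show ?thesis
      unfolding pairing_def by (simp add: mult.commute)
  qed
  then show ?thesis
    using assms(4) by (intro AE_zero_if_orthogonal_to_Linfty) auto
qed

lemma convex_on_fs_half:
  assumes "convex_on_fs X \<phi>" "x \<in> X" "y \<in> X"
  shows "\<phi> (\<lambda>\<omega>. (x \<omega> + y \<omega>) / 2) \<le> ereal (1/2) * \<phi> x + ereal (1/2) * \<phi> y"
  using assms(1)[unfolded convex_on_fs_def, rule_format, OF assms(2,3), of "1/2"]
  by (simp add: add_divide_distrib)

lemma convex_on_fs_midpoint_le:
  assumes "convex_on_fs X \<phi>" "\<forall>x\<in>X. \<phi> x \<noteq> -\<infinity>" "x \<in> X" "y \<in> X"
    and "\<phi> x \<le> ereal p" "\<phi> y \<le> ereal q"
  shows "\<phi> (\<lambda>\<omega>. (x \<omega> + y \<omega>) / 2) \<le> ereal ((p + q) / 2)"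
proof -
  obtain a b where ab: "\<phi> x = ereal a" "\<phi> y = ereal b"
    using assms(2-6) by (cases "\<phi> x"; cases "\<phi> y") auto
  have "\<phi> (\<lambda>\<omega>. (x \<omega> + y \<omega>) / 2) \<le> ereal (1/2) * \<phi> x + ereal (1/2) * \<phi> y"
    using convex_on_fs_half assms(1,3,4) .
  also have "\<dots> \<le> ereal ((p + q) / 2)"
    using assms(5,6) ab by simp
  finally show ?thesis .
qed

lemma convex_on_fs_ge_by_reflection:
  assumes "lin_subspace X" "convex_on_fs X \<phi>" "\<forall>x\<in>X. \<phi> x \<noteq> -\<infinity>" "x \<in> X"
    and "\<phi> (\<lambda>_. 0) = ereal r0" "\<phi> (\<lambda>\<omega>. - x \<omega>) \<le> ereal (r0 - a)"
  shows "ereal (r0 + a) \<le> \<phi> x"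
proof (cases "\<phi> x")
  case (real c)
  have "(\<lambda>\<omega>. - x \<omega>) = (\<lambda>\<omega>. (-1) * x \<omega>)" by simp
  then have mx: "(\<lambda>\<omega>. - x \<omega>) \<in> X"
    using assms(1,4) unfolding lin_subspace_def by metis
  then obtain b where b: "\<phi> (\<lambda>\<omega>. - x \<omega>) = ereal b" "b \<le> r0 - a"
    using assms(3,6) by (cases "\<phi> (\<lambda>\<omega>. - x \<omega>)") auto
  have "\<phi> (\<lambda>_. 0) \<le> ereal (1/2) * \<phi> x + ereal (1/2) * \<phi> (\<lambda>\<omega>. - x \<omega>)"
    using convex_on_fs_half[OF assms(2,4) mx] by simp
  then show ?thesis using assms(5) real b by simp
qed (use assms(3,4) in simp_all)

lemma finite_at_zero_if_proper:
  assumes "lin_subspace X" "Linfty M \<subseteq> Xs" "\<forall>x\<in>X. integrable M x" "\<forall>x\<in>X. \<phi> x \<noteq> -\<infinity>"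
    and "\<forall>x\<in>X. \<forall>x'\<in>X. (AE \<omega> in M. x \<omega> = x' \<omega>) \<longrightarrow> \<phi> x = \<phi> x'" "proper_on X \<phi>"
    and "weakly_dense M X Xs (fspan S)" "\<forall>z\<in>S. affine_along \<phi> z"
  shows "\<exists>r0. \<phi> (\<lambda>_. 0) = ereal r0"
proof -
  have X0: "(\<lambda>_. 0) \<in> X"
    using assms(1) unfolding lin_subspace_def by blast
  have "\<phi> (\<lambda>_. 0) < \<infinity>"
  proof (cases "S = {}")
    case True
    obtain x where x: "x \<in> X" "\<phi> x < \<infinity>"
      using assms(6) unfolding proper_on_def by blast
    have "weakly_dense M X Xs {\<lambda>_. 0}"
      using assms(7) unfolding True fspan_empty .
    then have "AE \<omega> in M. x \<omega> = 0"
      using AE_zero_if_weakly_dense_zero[OF assms(2) _ x(1)] assms(3) x(1) by blast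
    then have "\<phi> x = \<phi> (\<lambda>_. 0)"
      using assms(5)[rule_format, OF x(1) X0] by simp
    then show ?thesis
      using x(2) by simp
  next
    case False
    then obtain z where "z \<in> S" by blast
    then have "\<phi> (\<lambda>\<omega>. 0 * z \<omega>) < \<infinity>"
      using assms(8) unfolding affine_along_def by blast
    then show ?thesis by simp
  qed
  then show ?thesis
    using assms(4) X0 by (cases "\<phi> (\<lambda>_. 0)") auto
qed

lemma convex_fspan_sum_le:
  fixes n :: nat
  assumes X: "lin_subspace X" "S \<subseteq> X" and cvx: "convex_on_fs X \<phi>" "\<forall>x\<in>X. \<phi> x \<noteq> -\<infinity>"
    and "\<phi> (\<lambda>_. 0) = ereal r0" and A: "\<forall>z\<in>S. \<forall>m. \<phi> (\<lambda>\<omega>. m * z \<omega>) = ereal (A z * m + r0)"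
    and "\<forall>i<n. Z i \<in> S"
  shows "\<phi> (\<lambda>\<omega>. \<Sum>i<n. c i * Z i \<omega>) \<le> ereal ((\<Sum>i<n. c i * A (Z i)) + r0)"
  using assms(7)
proof (induction n arbitrary: c)
  case 0
  then show ?case using assms(5) by simp
next
  case (Suc n)
  \<comment> \<open>The sum up to n is the midpoint of twice the sum below n and twice its last term.\<close>
  define u where "u = (\<lambda>\<omega>. \<Sum>i<n. (2 * c i) * Z i \<omega>)"
  define w where "w = (\<lambda>\<omega>. (2 * c n) * Z n \<omega>)"
  have "u \<in> X"
    unfolding u_def by (intro lin_subspace_sum[OF X(1)]) (use Suc.prems X(2) in auto)
  moreover have "w \<in> X"
    using X Suc.prems unfolding w_def lin_subspace_def by auto
  moreover have "\<phi> u \<le> ereal ((\<Sum>i<n. (2 * c i) * A (Z i)) + r0)"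
    using Suc unfolding u_def by simp
  moreover have "\<phi> w \<le> ereal (A (Z n) * (2 * c n) + r0)"
    using A Suc.prems unfolding w_def by simp
  ultimately have "\<phi> (\<lambda>\<omega>. (u \<omega> + w \<omega>) / 2)
      \<le> ereal (((\<Sum>i<n. (2 * c i) * A (Z i)) + r0 + (A (Z n) * (2 * c n) + r0)) / 2)"
    using convex_on_fs_midpoint_le[OF cvx] by blast
  moreover have "(\<lambda>\<omega>. (u \<omega> + w \<omega>) / 2) = (\<lambda>\<omega>. \<Sum>i<Suc n. c i * Z i \<omega>)"
    unfolding u_def w_def by (simp add: fun_eq_iff sum_distrib_left sum_distrib_right mult_ac)
  moreover have "((\<Sum>i<n. (2 * c i) * A (Z i)) + r0 + (A (Z n) * (2 * c n) + r0)) / 2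
      = (\<Sum>i<Suc n. c i * A (Z i)) + r0"
    by (simp add: sum_distrib_left sum_distrib_right mult_ac field_simps)
  ultimately show ?case by metis
qed

lemma convex_fspan_sum_eq:
  fixes n :: nat
  assumes "lin_subspace X" "S \<subseteq> X" "convex_on_fs X \<phi>" "\<forall>x\<in>X. \<phi> x \<noteq> -\<infinity>"
    and "\<phi> (\<lambda>_. 0) = ereal r0" "\<forall>z\<in>S. \<forall>m. \<phi> (\<lambda>\<omega>. m * z \<omega>) = ereal (A z * m + r0)"
    and "\<forall>i<n. Z i \<in> S"
  shows "\<phi> (\<lambda>\<omega>. \<Sum>i<n. c i * Z i \<omega>) = ereal ((\<Sum>i<n. c i * A (Z i)) + r0)"
proof (rule antisym)
  show "\<phi> (\<lambda>\<omega>. \<Sum>i<n. c i * Z i \<omega>) \<le> ereal ((\<Sum>i<n. c i * A (Z i)) + r0)"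
    using convex_fspan_sum_le[OF assms] .
  have "(\<lambda>\<omega>. - (\<Sum>i<n. c i * Z i \<omega>)) = (\<lambda>\<omega>. \<Sum>i<n. (- c i) * Z i \<omega>)"
    by (simp add: sum_negf)
  then have "\<phi> (\<lambda>\<omega>. - (\<Sum>i<n. c i * Z i \<omega>)) \<le> ereal (r0 - (\<Sum>i<n. c i * A (Z i)))"
    using convex_fspan_sum_le[OF assms, of "\<lambda>i. - c i"] by (simp add: sum_negf)
  moreover have "(\<lambda>\<omega>. \<Sum>i<n. c i * Z i \<omega>) \<in> X"
    using lin_subspace_sum[OF assms(1)] assms(2,7) by blast
  ultimately show "ereal ((\<Sum>i<n. c i * A (Z i)) + r0) \<le> \<phi> (\<lambda>\<omega>. \<Sum>i<n. c i * Z i \<omega>)"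
    using convex_on_fs_ge_by_reflection[OF assms(1,3,4) _ assms(5),
        of "\<lambda>\<omega>. \<Sum>i<n. c i * Z i \<omega>" "\<Sum>i<n. c i * A (Z i)"]
    by (simp add: add.commute)
qed

lemma convex_affine_on_fspan:
  assumes "lin_subspace X" "S \<subseteq> X" "convex_on_fs X \<phi>" "\<forall>x\<in>X. \<phi> x \<noteq> -\<infinity>"
    and r0: "\<phi> (\<lambda>_. 0) = ereal r0" and "\<forall>z\<in>S. affine_along \<phi> z"
  shows "\<exists>L. linear_on (fspan S) L \<and> (\<forall>v\<in>fspan S. \<phi> v = ereal (L v + r0))"
proof -
  have "\<forall>z\<in>S. \<exists>a. \<forall>m. \<phi> (\<lambda>\<omega>. m * z \<omega>) = ereal (a * m + r0)"
    using assms(6) r0 unfolding affine_along_def by simp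
  then obtain A where A: "\<forall>z\<in>S. \<forall>m. \<phi> (\<lambda>\<omega>. m * z \<omega>) = ereal (A z * m + r0)"
    by metis
  define L where "L v = real_of_ereal (\<phi> v) - r0" for v
  have L_sum: "L (\<lambda>\<omega>. \<Sum>i<n. c i * Z i \<omega>) = (\<Sum>i<n. c i * A (Z i))"
    if "\<forall>i<n. Z i \<in> S" for n :: nat and c Z
    using convex_fspan_sum_eq[OF assms(1-5) A that] unfolding L_def by simp
  have "linear_on (fspan S) L"
    unfolding linear_on_def
  proof (intro ballI allI)
    fix u w a b assume "u \<in> fspan S" "w \<in> fspan S"
    then obtain n :: nat and c Z and m :: nat and d W
      where u: "u = (\<lambda>\<omega>. \<Sum>i<n. c i * Z i \<omega>)" "\<forall>i<n. Z i \<in> S"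
        and w: "w = (\<lambda>\<omega>. \<Sum>j<m. d j * W j \<omega>)" "\<forall>j<m. W j \<in> S"
      unfolding fspan_def by blast
    have "\<forall>k<n + m. (if k < n then Z k else W (k - n)) \<in> S"
      using u(2) w(2) by auto
    then show "L (\<lambda>\<omega>. a * u \<omega> + b * w \<omega>) = a * L u + b * L w"
      unfolding fspan_lincomb_repr[OF u(1) w(1)]
      by (simp add: L_sum u w sum_append_lincomb[where g = A])
  qed
  moreover have "\<phi> v = ereal (L v + r0)" if "v \<in> fspan S" for v
    using that convex_fspan_sum_eq[OF assms(1-5) A] unfolding fspan_def L_def by auto
  ultimately show ?thesis by blast
qed

definition weak_nhds_zero :: "'a measure \<Rightarrow> ('a \<Rightarrow> real) set \<Rightarrow> ('a \<Rightarrow> real) set \<Rightarrow> ('a \<Rightarrow> real) filter" where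
  "weak_nhds_zero M V Xs = (INF b\<in>{(ys, e). set ys \<subseteq> Xs \<and> (0::real) < e}.
      principal {v\<in>V. \<forall>y\<in>set (fst b). \<bar>pairing M v y\<bar> < snd b})"

lemma eventually_weak_nhds_zero:
  "eventually P (weak_nhds_zero M V Xs) \<longleftrightarrow>
    (\<exists>ys e. set ys \<subseteq> Xs \<and> 0 < e \<and> (\<forall>v\<in>V. (\<forall>y\<in>set ys. \<bar>pairing M v y\<bar> < e) \<longrightarrow> P v))"
proof -
  let ?B = "{(ys, e). set ys \<subseteq> Xs \<and> (0::real) < e}"
  let ?U = "\<lambda>b. {v\<in>V. \<forall>y\<in>set (fst b). \<bar>pairing M v y\<bar> < snd b}"
  have "eventually P (weak_nhds_zero M V Xs) \<longleftrightarrow> (\<exists>b\<in>?B. eventually P (principal (?U b)))"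
    unfolding weak_nhds_zero_def
  proof (rule eventually_INF_base)
    have "([], 1) \<in> ?B" by simp
    then show "?B \<noteq> {}" by blast
  next
    fix a b assume "a \<in> ?B" "b \<in> ?B"
    then have "(fst a @ fst b, min (snd a) (snd b)) \<in> ?B" by auto
    moreover have "principal (?U (fst a @ fst b, min (snd a) (snd b)))
        \<le> inf (principal (?U a)) (principal (?U b))"
      by auto
    ultimately show "\<exists>c\<in>?B. principal (?U c) \<le> inf (principal (?U a)) (principal (?U b))" ..
  qed
  then show ?thesis by (simp add: eventually_principal) blast
qed

lemma weak_conv_weak_nhds_zero: "weak_conv M Xs (weak_nhds_zero M V Xs) (\<lambda>_. 0)"
  unfolding weak_conv_def tendsto_iff
proof (intro ballI allI impI)
  fix y and e :: real assume "y \<in> Xs" "0 < e"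
  then show "eventually (\<lambda>v. dist (integral\<^sup>L M (\<lambda>\<omega>. v \<omega> * y \<omega>)) (integral\<^sup>L M (\<lambda>\<omega>. 0 * y \<omega>)) < e)
      (weak_nhds_zero M V Xs)"
    unfolding eventually_weak_nhds_zero pairing_def
    by (intro exI[of _ "[y]"] exI[of _ e]) (simp add: dist_real_def)
qed

lemma weakly_lsc_bounded_below_near_zero:
  assumes "weakly_lsc M X Xs \<phi>" "V \<subseteq> X" "(\<lambda>_. 0) \<in> X"
    and "\<phi> (\<lambda>_. 0) = ereal r0" "\<forall>v\<in>V. \<phi> v = ereal (L v + r0)"
  shows "\<exists>ys e. set ys \<subseteq> Xs \<and> 0 < e \<and> (\<forall>v\<in>V. (\<forall>y\<in>set ys. \<bar>pairing M v y\<bar> < e) \<longrightarrow> -1 < L v)"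
proof -
  let ?N = "weak_nhds_zero M V Xs"
  have "eventually (\<lambda>v. v \<in> V) ?N"
    unfolding eventually_weak_nhds_zero by (intro exI[of _ "[]"] exI[of _ 1]) simp
  then have "eventually (\<lambda>v. v \<in> X) ?N"
    using assms(2) by (auto elim: eventually_mono)
  then have "\<phi> (\<lambda>_. 0) \<le> Liminf ?N \<phi>"
    using assms(1,3) weak_conv_weak_nhds_zero unfolding weakly_lsc_def by blast
  then have "ereal (r0 - 1) < Liminf ?N \<phi>"
    using assms(4) by (simp add: less_le_trans[of _ "ereal r0"])
  then have "eventually (\<lambda>v. ereal (r0 - 1) < \<phi> v) ?N"
    by (rule less_LiminfD)
  then show ?thesis
    unfolding eventually_weak_nhds_zero using assms(5) by fastforce
qed

lemma linear_on_bounded_below_near_zero_is_pairing: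
  assumes Xs: "lin_subspace Xs" and V: "lin_subspace V"
    and int: "\<forall>v\<in>V. \<forall>y\<in>Xs. integrable M (\<lambda>\<omega>. v \<omega> * y \<omega>)"
    and L: "linear_on V L" and ys: "set ys \<subseteq> Xs" and "0 < e"
    and bounded: "\<forall>v\<in>V. (\<forall>y\<in>set ys. \<bar>pairing M v y\<bar> < e) \<longrightarrow> -1 < L v"
  shows "\<exists>Y\<in>Xs. \<forall>v\<in>V. L v = pairing M v Y"
proof -
  have ysXs: "\<forall>i<length ys. ys ! i \<in> Xs"
    using ys by auto
  have ker: "\<forall>v\<in>V. (\<forall>i<length ys. pairing M v (ys ! i) = 0) \<longrightarrow> L v = 0"
  proof (intro ballI impI)
    fix v assume v: "v \<in> V" "\<forall>i<length ys. pairing M v (ys ! i) = 0"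
    show "L v = 0"
    proof (rule ccontr)
      assume "L v \<noteq> 0"
      \<comment> \<open>The multiple t v stays in the neighbourhood but has L (t v) = -2.\<close>
      define t where "t = -2 / L v"
      have "(\<lambda>\<omega>. t * v \<omega>) \<in> V"
        using V v(1) unfolding lin_subspace_def by blast
      moreover have "\<forall>y\<in>set ys. pairing M (\<lambda>\<omega>. t * v \<omega>) y = 0"
        using v(2) by (auto simp: in_set_conv_nth pairing_def mult.assoc)
      ultimately have "-1 < L (\<lambda>\<omega>. t * v \<omega> + 0 * v \<omega>)"
        using bounded \<open>0 < e\<close> by simp
      also have "L (\<lambda>\<omega>. t * v \<omega> + 0 * v \<omega>) = -2"
        using L[unfolded linear_on_def, rule_format, OF v(1) v(1), of t 0] \<open>L v \<noteq> 0\<close>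
        unfolding t_def by simp
      finally show False by simp
    qed
  qed
  have "\<forall>i<length ys. linear_on V (\<lambda>v. pairing M v (ys ! i))"
    using ysXs int by (auto intro: linear_on_pairing)
  then obtain coef where coef: "\<forall>v\<in>V. L v = (\<Sum>i<length ys. coef i * pairing M v (ys ! i))"
    using linear_on_combination_if_common_kernel[OF V _ L ker] by blast
  define Y where "Y = (\<lambda>\<omega>. \<Sum>i<length ys. coef i * (ys ! i) \<omega>)"
  have "Y \<in> Xs"
    unfolding Y_def using lin_subspace_sum[OF Xs ysXs] .
  moreover have "L v = pairing M v Y" if "v \<in> V" for v
  proof -
    have "\<forall>i<length ys. integrable M (\<lambda>\<omega>. v \<omega> * (ys ! i) \<omega>)"
      using that ysXs int by blast
    then have "pairing M v Y = (\<Sum>i<length ys. coef i * pairing M v (ys ! i))"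
      unfolding Y_def by (rule pairing_sum_right)
    then show ?thesis using that coef by simp
  qed
  ultimately show ?thesis by blast
qed

lemma weakly_lsc_affine_on_subspace_is_pairing:
  assumes "lin_subspace Xs" "lin_subspace V" "V \<subseteq> X" "(\<lambda>_. 0) \<in> X"
    and int: "\<forall>x\<in>X. \<forall>y\<in>Xs. integrable M (\<lambda>\<omega>. x \<omega> * y \<omega>)"
    and lsc: "weakly_lsc M X Xs \<phi>" and r0: "\<phi> (\<lambda>_. 0) = ereal r0"
    and L: "linear_on V L" "\<forall>v\<in>V. \<phi> v = ereal (L v + r0)"
  shows "\<exists>Y\<in>Xs. \<forall>v\<in>V. \<phi> v = ereal (pairing M v Y + r0)"
proof -
  obtain ys e where "set ys \<subseteq> Xs" "0 < e"
      "\<forall>v\<in>V. (\<forall>y\<in>set ys. \<bar>pairing M v y\<bar> < e) \<longrightarrow> -1 < L v"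
    using weakly_lsc_bounded_below_near_zero[OF lsc assms(3,4) r0 L(2)] by blast
  moreover have "\<forall>v\<in>V. \<forall>y\<in>Xs. integrable M (\<lambda>\<omega>. v \<omega> * y \<omega>)"
    using int assms(3) by blast
  ultimately obtain Y where "Y \<in> Xs" "\<forall>v\<in>V. L v = pairing M v Y"
    using linear_on_bounded_below_near_zero_is_pairing[OF assms(1,2) _ L(1)] by blast
  then show ?thesis
    using L(2) by auto
qed

lemma weakly_lsc_le_pairing_if_dense:
  assumes "weakly_lsc M X Xs \<phi>" "weakly_dense M X Xs V" "V \<subseteq> X" "Y \<in> Xs"
    and "\<forall>v\<in>V. \<phi> v = ereal (pairing M v Y + r0)" "x \<in> X"
  shows "\<phi> x \<le> ereal (pairing M x Y + r0)"
proof -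
  obtain F where F: "F \<noteq> bot" "eventually (\<lambda>v. v \<in> V) F" "weak_conv M Xs F x"
    using assms(2,6) unfolding weakly_dense_def by blast
  have "eventually (\<lambda>v. v \<in> X) F"
    using F(2) assms(3) by (auto elim: eventually_mono)
  then have "\<phi> x \<le> Liminf F \<phi>"
    using assms(1,6) F(3) unfolding weakly_lsc_def by blast
  also have "Liminf F \<phi> = Liminf F (\<lambda>v. ereal (pairing M v Y + r0))"
    using F(2) assms(5) by (intro Liminf_eq) (auto elim: eventually_mono)
  also have "\<dots> = ereal (pairing M x Y + r0)"
  proof (rule lim_imp_Liminf)
    show "\<not> trivial_limit F" using F(1) by (simp add: trivial_limit_def)
    have "((\<lambda>v. pairing M v Y) \<longlongrightarrow> pairing M x Y) F"
      using F(3) assms(4) unfolding weak_conv_def pairing_def by blast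
    then show "((\<lambda>v. ereal (pairing M v Y + r0)) \<longlongrightarrow> ereal (pairing M x Y + r0)) F"
      by (intro tendsto_intros)
  qed
  finally show ?thesis .
qed

lemma convex_weakly_lsc_eq_pairing_if_dense:
  assumes X: "lin_subspace X" and cvx: "convex_on_fs X \<phi>" "\<forall>x\<in>X. \<phi> x \<noteq> -\<infinity>"
    and lsc: "weakly_lsc M X Xs \<phi>" and dense: "weakly_dense M X Xs V" "V \<subseteq> X"
    and Y: "Y \<in> Xs" "\<forall>x\<in>X. integrable M (\<lambda>\<omega>. x \<omega> * Y \<omega>)"
    and r0: "\<phi> (\<lambda>_. 0) = ereal r0" and eq: "\<forall>v\<in>V. \<phi> v = ereal (pairing M v Y + r0)"
    and x: "x \<in> X"
  shows "\<phi> x = ereal (pairing M x Y + r0)"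
proof (rule antisym)
  show "\<phi> x \<le> ereal (pairing M x Y + r0)"
    using weakly_lsc_le_pairing_if_dense[OF lsc dense Y(1) eq x] .
  have "(\<lambda>\<omega>. (-1) * x \<omega>) \<in> X"
    using X x unfolding lin_subspace_def by blast
  then have "\<phi> (\<lambda>\<omega>. - x \<omega>) \<le> ereal (r0 - pairing M x Y)"
    using weakly_lsc_le_pairing_if_dense[OF lsc dense Y(1) eq, of "\<lambda>\<omega>. - x \<omega>"]
    by (simp add: pairing_def)
  then show "ereal (pairing M x Y + r0) \<le> \<phi> x"
    using convex_on_fs_ge_by_reflection[OF X cvx x r0, of "pairing M x Y"]
    by (simp add: add.commute)
qed

lemma affine_on_fs_if_eq_pairing:
  assumes "lin_subspace X" "\<forall>x\<in>X. integrable M (\<lambda>\<omega>. x \<omega> * Y \<omega>)"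
    and "\<forall>x\<in>X. \<phi> x = ereal (pairing M x Y + r0)"
  shows "affine_on_fs X \<phi>"
proof -
  have "(\<lambda>_. 0) \<in> X" using assms(1) unfolding lin_subspace_def by blast
  then have "\<phi> (\<lambda>_. 0) = ereal r0"
    using assms(3) by (simp add: pairing_def)
  then show ?thesis
    using assms lin_subspace_lincomb[OF assms(1)] linear_on_pairing[OF assms(2)]
    unfolding affine_on_fs_def linear_on_def by (simp add: algebra_simps)
qed

theorem corollary3p6:
  fixes M :: "'a measure" and X Xs S :: "('a \<Rightarrow> real) set"
    and \<phi> :: "('a \<Rightarrow> real) \<Rightarrow> ereal"
  assumes "prob_space M" and "nonatomic M"
    and "lin_subspace X" and "lin_subspace Xs"
    and "law_invariant M X" and "law_invariant M Xs"
    and "Linfty M \<subseteq> X" and "Linfty M \<subseteq> Xs"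
    and "\<forall>x\<in>X. integrable M x" and "\<forall>y\<in>Xs. integrable M y"
    and "\<forall>x\<in>X. \<forall>y\<in>Xs. integrable M (\<lambda>\<omega>. x \<omega> * y \<omega>)"
    and "\<forall>x\<in>X. \<phi> x \<noteq> -\<infinity>"
    and "\<forall>x\<in>X. \<forall>x'\<in>X. (AE \<omega> in M. x \<omega> = x' \<omega>) \<longrightarrow> \<phi> x = \<phi> x'"
    and "proper_on X \<phi>" and "convex_on_fs X \<phi>" and "weakly_lsc M X Xs \<phi>"
    and "S \<subseteq> X" and "weakly_dense M X Xs (fspan S)"
    and "\<forall>z\<in>S. affine_along \<phi> z"
  shows "affine_on_fs X \<phi> \<and>
    (\<exists>y\<in>Xs. (\<forall>x\<in>X. \<phi> x = ereal (integral\<^sup>L M (\<lambda>\<omega>. x \<omega> * y \<omega>)) + \<phi> (\<lambda>_. 0)) \<and>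
       (\<forall>y'\<in>Xs. (\<forall>x\<in>X. \<phi> x = ereal (integral\<^sup>L M (\<lambda>\<omega>. x \<omega> * y' \<omega>)) + \<phi> (\<lambda>_. 0))
          \<longrightarrow> (AE \<omega> in M. y' \<omega> = y \<omega>)))"
proof -
  obtain r0 where r0: "\<phi> (\<lambda>_. 0) = ereal r0"
    using finite_at_zero_if_proper[OF assms(3,8,9,12,13,14,18,19)] by blast
  have span: "fspan S \<subseteq> X"
    using fspan_subset[OF assms(3,17)] .
  obtain L where "linear_on (fspan S) L" "\<forall>v\<in>fspan S. \<phi> v = ereal (L v + r0)"
    using convex_affine_on_fspan[OF assms(3,17,15,12) r0 assms(19)] by blast
  moreover have "(\<lambda>_. 0) \<in> X"
    using assms(3) unfolding lin_subspace_def by blast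
  ultimately obtain Y where Y: "Y \<in> Xs" "\<forall>v\<in>fspan S. \<phi> v = ereal (pairing M v Y + r0)"
    using weakly_lsc_affine_on_subspace_is_pairing[OF assms(4) lin_subspace_fspan span _ assms(11,16) r0]
    by blast
  have intY: "\<forall>x\<in>X. integrable M (\<lambda>\<omega>. x \<omega> * Y \<omega>)"
    using assms(11) Y(1) by blast
  have rep: "\<forall>x\<in>X. \<phi> x = ereal (pairing M x Y + r0)"
    using convex_weakly_lsc_eq_pairing_if_dense[OF assms(3,15,12,16,18) span Y(1) intY r0 Y(2)] by blast
  show ?thesis
  proof (intro conjI bexI[OF _ Y(1)] ballI impI)
    show "affine_on_fs X \<phi>"
      using affine_on_fs_if_eq_pairing[OF assms(3) intY rep] .
    show "\<phi> x = ereal (integral\<^sup>L M (\<lambda>\<omega>. x \<omega> * Y \<omega>)) + \<phi> (\<lambda>_. 0)" if "x \<in> X" for x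
      using rep that r0 by (simp add: pairing_def)
    fix y' assume "y' \<in> Xs"
      and "\<forall>x\<in>X. \<phi> x = ereal (integral\<^sup>L M (\<lambda>\<omega>. x \<omega> * y' \<omega>)) + \<phi> (\<lambda>_. 0)"
    then show "AE \<omega> in M. y' \<omega> = Y \<omega>"
      using AE_eq_if_pairings_eq[OF assms(7)] Y(1) assms(10,11) rep r0 by (simp add: pairing_def)
  qed
qed

end
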